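(* Let $(H,\leq,\ast)$ be a discrete $\omega$-dimensional poc-set and let $A$ be a maximal transverse subset of $H$. Then $$\pi_A=\{h\in H:\exists a\in A,\ a\leq h\}\cup\{h\in H:\exists a\in A,\ a^\ast<h\}$$ is a principal ultrafilter on $H$. Moreover, every principal ultrafilter on $H$ is of this form.
   Context: A poc-set $(H,\leq,\ast)$ is a poset with minimum $0$ and an order-reversing involution $h\mapsto h^\ast$ such that $h\leq h^\ast$ implies $h=0$; $0,0^\ast$ are trivial, others proper. Discrete: for proper $a,b$ the interval $\{h:a\le h\le b\}$ is finite. $h,k$ are nested if one of $h\le k$, $h^\ast\le k$, $h\le k^\ast$, $h^\ast\le k^\ast$ holds, transverse otherwise; a set is transverse if its elements are pairwise transverse. $\omega$-dimensional: no infinite transverse subset. An ultrafilter is $\alpha\subseteq H$ such that for each $h$ exactly one of $h,h^\ast$ lies in $\alpha$, and no $h,k\in\alpha$ satisfy $h\le k^\ast$. An ultrafilter is principal if every descending chain $h_1\ge h_2\ge\cdots$ of its elements is eventually constant. *)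

theory Defs
  imports Main
begin

definition pocset :: "'a set \<Rightarrow> ('a \<Rightarrow> 'a \<Rightarrow> bool) \<Rightarrow> ('a \<Rightarrow> 'a) \<Rightarrow> 'a \<Rightarrow> bool" where
  "pocset H le star zero \<longleftrightarrow>
     (\<forall>h\<in>H. le h h) \<and>
     (\<forall>h\<in>H. \<forall>k\<in>H. le h k \<and> le k h \<longrightarrow> h = k) \<and>
     (\<forall>h\<in>H. \<forall>k\<in>H. \<forall>l\<in>H. le h k \<and> le k l \<longrightarrow> le h l) \<and>
     zero \<in> H \<and> (\<forall>h\<in>H. le zero h) \<and>
     (\<forall>h\<in>H. star h \<in> H) \<and>
     (\<forall>h\<in>H. star (star h) = h) \<and>
     (\<forall>h\<in>H. \<forall>k\<in>H. le h k \<longrightarrow> le (star k) (star h)) \<and>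
     (\<forall>h\<in>H. le h (star h) \<longrightarrow> h = zero)"

definition proper :: "'a set \<Rightarrow> ('a \<Rightarrow> 'a) \<Rightarrow> 'a \<Rightarrow> 'a \<Rightarrow> bool" where
  "proper H star zero h \<longleftrightarrow> h \<in> H \<and> h \<noteq> zero \<and> h \<noteq> star zero"

definition discrete_pocset :: "'a set \<Rightarrow> ('a \<Rightarrow> 'a \<Rightarrow> bool) \<Rightarrow> ('a \<Rightarrow> 'a) \<Rightarrow> 'a \<Rightarrow> bool" where
  "discrete_pocset H le star zero \<longleftrightarrow>
     (\<forall>a b. proper H star zero a \<and> proper H star zero b \<longrightarrow>
        finite {h \<in> H. le a h \<and> le h b})"

definition nested :: "('a \<Rightarrow> 'a \<Rightarrow> bool) \<Rightarrow> ('a \<Rightarrow> 'a) \<Rightarrow> 'a \<Rightarrow> 'a \<Rightarrow> bool" where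
  "nested le star h k \<longleftrightarrow> le h k \<or> le (star h) k \<or> le h (star k) \<or> le (star h) (star k)"

definition transverse_set :: "('a \<Rightarrow> 'a \<Rightarrow> bool) \<Rightarrow> ('a \<Rightarrow> 'a) \<Rightarrow> 'a set \<Rightarrow> bool" where
  "transverse_set le star A \<longleftrightarrow> (\<forall>h\<in>A. \<forall>k\<in>A. h \<noteq> k \<longrightarrow> \<not> nested le star h k)"

definition omega_dimensional :: "'a set \<Rightarrow> ('a \<Rightarrow> 'a \<Rightarrow> bool) \<Rightarrow> ('a \<Rightarrow> 'a) \<Rightarrow> bool" where
  "omega_dimensional H le star \<longleftrightarrow>
     (\<forall>A. A \<subseteq> H \<and> transverse_set le star A \<longrightarrow> finite A)"

definition maximal_transverse :: "'a set \<Rightarrow> ('a \<Rightarrow> 'a \<Rightarrow> bool) \<Rightarrow> ('a \<Rightarrow> 'a) \<Rightarrow> 'a \<Rightarrow> 'a set \<Rightarrow> bool" where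
  "maximal_transverse H le star zero A \<longleftrightarrow>
     (\<forall>a\<in>A. proper H star zero a) \<and> transverse_set le star A \<and>
     (\<forall>B. (\<forall>b\<in>B. proper H star zero b) \<and> transverse_set le star B \<and> A \<subseteq> B \<longrightarrow> B = A)"

definition ultrafilter :: "'a set \<Rightarrow> ('a \<Rightarrow> 'a \<Rightarrow> bool) \<Rightarrow> ('a \<Rightarrow> 'a) \<Rightarrow> 'a set \<Rightarrow> bool" where
  "ultrafilter H le star \<alpha> \<longleftrightarrow>
     \<alpha> \<subseteq> H \<and>
     (\<forall>h\<in>H. (h \<in> \<alpha>) \<noteq> (star h \<in> \<alpha>)) \<and>
     (\<forall>h\<in>\<alpha>. \<forall>k\<in>\<alpha>. \<not> le h (star k))"

definition principal_ultrafilter :: "'a set \<Rightarrow> ('a \<Rightarrow> 'a \<Rightarrow> bool) \<Rightarrow> ('a \<Rightarrow> 'a) \<Rightarrow> 'a set \<Rightarrow> bool" where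
  "principal_ultrafilter H le star \<alpha> \<longleftrightarrow>
     ultrafilter H le star \<alpha> \<and>
     (\<forall>f :: nat \<Rightarrow> 'a. (\<forall>n. f n \<in> \<alpha>) \<and> (\<forall>n. le (f (Suc n)) (f n)) \<longrightarrow>
        (\<exists>N. \<forall>n\<ge>N. f n = f N))"

definition pi_set :: "'a set \<Rightarrow> ('a \<Rightarrow> 'a \<Rightarrow> bool) \<Rightarrow> ('a \<Rightarrow> 'a) \<Rightarrow> 'a set \<Rightarrow> 'a set" where
  "pi_set H le star A =
     {h \<in> H. \<exists>a\<in>A. le a h} \<union> {h \<in> H. \<exists>a\<in>A. le (star a) h \<and> star a \<noteq> h}"

end

theory Submission
  imports Defs "HOL-Library.Infinite_Set"
begin

(* If h <= k^* with h above a or a^* and k above b or b^*, then a and b are nested; so for a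
   transverse set A of proper elements pi_A is consistent, and by maximality every proper h is
   nested with some a in A, which makes pi_A complete.  Along a descending chain in pi_A some
   element of the finite set A \<union> A^* stays below every term, and discreteness makes the
   interval above it finite, so the chain stabilises.
   Conversely, in a principal ultrafilter alpha every element lies above a minimal one, and two
   distinct nested minimal elements a, m satisfy a^* < m.  For a maximal transverse family A of
   minimal elements (Zorn) this gives alpha = pi_A, and completeness of alpha forces A to be
   maximal in H. *)

definition minimal_elements :: "('a \<Rightarrow> 'a \<Rightarrow> bool) \<Rightarrow> 'a set \<Rightarrow> 'a set" where
  "minimal_elements le S = {a \<in> S. \<forall>h\<in>S. le h a \<longrightarrow> h = a}"

lemma transverse_set_eq_pairwise:
  "transverse_set le star A \<longleftrightarrow> pairwise (\<lambda>h k. \<not> nested le star h k) A"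
  by (auto simp: transverse_set_def pairwise_def)

lemma exists_maximal_pairwise_subset:
  "\<exists>B\<subseteq>S. pairwise R B \<and> (\<forall>C. B \<subseteq> C \<longrightarrow> C \<subseteq> S \<longrightarrow> pairwise R C \<longrightarrow> C = B)"
proof -
  let ?F = "{B. B \<subseteq> S \<and> pairwise R B}"
  have "\<forall>\<C>\<in>chains ?F. \<Union>\<C> \<in> ?F"
  proof
    fix \<C>
    assume "\<C> \<in> chains ?F"
    then have "\<C> \<subseteq> ?F" "chain\<^sub>\<subseteq> \<C>"
      by (auto simp: chains_def)
    then show "\<Union>\<C> \<in> ?F"
      using pairwise_chain_Union[of \<C> R] by blast
  qed
  then obtain B where "B \<in> ?F" "\<forall>C\<in>?F. B \<subseteq> C \<longrightarrow> C = B"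
    by (blast dest: Zorn_Lemma)
  then show ?thesis
    by blast
qed

locale poc_set =
  fixes H :: "'a set" and le :: "'a \<Rightarrow> 'a \<Rightarrow> bool" (infix \<open>\<preceq>\<close> 50)
    and star :: "'a \<Rightarrow> 'a" and zero :: 'a
  assumes pocset: "pocset H (\<preceq>) star zero"
begin

lemma refl_le: "h \<in> H \<Longrightarrow> h \<preceq> h"
  using pocset unfolding pocset_def by blast

lemma antisym_le: "h \<in> H \<Longrightarrow> k \<in> H \<Longrightarrow> h \<preceq> k \<Longrightarrow> k \<preceq> h \<Longrightarrow> h = k"
  using pocset unfolding pocset_def by blast

lemma trans_le: "h \<in> H \<Longrightarrow> k \<in> H \<Longrightarrow> l \<in> H \<Longrightarrow> h \<preceq> k \<Longrightarrow> k \<preceq> l \<Longrightarrow> h \<preceq> l"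
  using pocset unfolding pocset_def by blast

lemma zero_mem: "zero \<in> H"
  using pocset unfolding pocset_def by blast

lemma zero_le: "h \<in> H \<Longrightarrow> zero \<preceq> h"
  using pocset unfolding pocset_def by blast

lemma star_mem: "h \<in> H \<Longrightarrow> star h \<in> H"
  using pocset unfolding pocset_def by blast

lemma star_star [simp]: "h \<in> H \<Longrightarrow> star (star h) = h"
  using pocset unfolding pocset_def by blast

lemma star_antitone: "h \<in> H \<Longrightarrow> k \<in> H \<Longrightarrow> h \<preceq> k \<Longrightarrow> star k \<preceq> star h"
  using pocset unfolding pocset_def by blast

lemma le_star_self_imp_zero: "h \<in> H \<Longrightarrow> h \<preceq> star h \<Longrightarrow> h = zero"
  using pocset unfolding pocset_def by blast

lemma le_star_zero: "h \<in> H \<Longrightarrow> h \<preceq> star zero"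
  using star_antitone[OF zero_mem star_mem zero_le[OF star_mem]] by simp

lemma star_le_swap: "h \<in> H \<Longrightarrow> k \<in> H \<Longrightarrow> star h \<preceq> k \<Longrightarrow> star k \<preceq> h"
  using star_antitone[of "star h" k] star_mem by simp

lemma star_inj: "h \<in> H \<Longrightarrow> k \<in> H \<Longrightarrow> star h = star k \<Longrightarrow> h = k"
  by (metis star_star)

lemma proper_star: "proper H star zero h \<Longrightarrow> proper H star zero (star h)"
  unfolding proper_def by (metis star_mem star_star zero_mem)

lemma nested_sym: "h \<in> H \<Longrightarrow> k \<in> H \<Longrightarrow> nested (\<preceq>) star h k \<Longrightarrow> nested (\<preceq>) star k h"
  unfolding nested_def by (metis star_antitone star_mem star_star)

lemma nested_star_right: "h \<in> H \<Longrightarrow> nested (\<preceq>) star a (star h) \<longleftrightarrow> nested (\<preceq>) star a h"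
  unfolding nested_def by auto

lemma le_star_antimono:
  assumes "x \<in> H" "h \<in> H" "y \<in> H" "k \<in> H" "x \<preceq> h" "y \<preceq> k" "h \<preceq> star k"
  shows "x \<preceq> star y"
proof -
  have "h \<preceq> star y"
    using trans_le[OF assms(2) star_mem[OF assms(4)] star_mem[OF assms(3)] assms(7)
        star_antitone[OF assms(3,4,6)]] .
  then show ?thesis
    using trans_le[OF assms(1,2) star_mem[OF assms(3)] assms(5)] by blast
qed

subsection \<open>Consistency and completeness of pi_A\<close>

lemma mem_pi_set:
  "h \<in> pi_set H (\<preceq>) star A \<longleftrightarrow> h \<in> H \<and> (\<exists>a\<in>A. a \<preceq> h \<or> star a \<preceq> h \<and> star a \<noteq> h)"
  by (auto simp: pi_set_def)

lemma mem_pi_set_singleton: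
  "h \<in> pi_set H (\<preceq>) star A \<Longrightarrow> \<exists>a\<in>A. h \<in> pi_set H (\<preceq>) star {a}"
  by (auto simp: pi_set_def)

lemma pi_set_singleton_consistent:
  assumes a: "proper H star zero a"
    and h: "h \<in> pi_set H (\<preceq>) star {a}" and k: "k \<in> pi_set H (\<preceq>) star {a}"
  shows "\<not> h \<preceq> star k"
proof
  assume hk: "h \<preceq> star k"
  have H: "a \<in> H" "star a \<in> H" "h \<in> H" "k \<in> H" "star k \<in> H"
    using a h k star_mem by (auto simp: proper_def mem_pi_set)
  consider "a \<preceq> h" "a \<preceq> k" | "a \<preceq> h" "star a \<preceq> k" "star a \<noteq> k"
    | "star a \<preceq> h" "star a \<noteq> h" "a \<preceq> k" | "star a \<preceq> h" "star a \<preceq> k" "star a \<noteq> k"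
    using h k by (auto simp: mem_pi_set)
  then show False
  proof cases
    case 1
    then have "a \<preceq> star a"
      using le_star_antimono[of a h a k] H hk by blast
    then show False
      using a le_star_self_imp_zero H by (auto simp: proper_def)
  next
    case 2
    have "a \<preceq> star k"
      using trans_le[OF H(1,3,5) 2(1) hk] .
    moreover have "star k \<preceq> a"
      using star_le_swap[OF H(1,4) 2(2)] .
    ultimately have "k = star a"
      using antisym_le H by fastforce
    then show False
      using 2 by simp
  next
    case 3
    have "h \<preceq> star a"
      using trans_le[OF H(3,5,2) hk star_antitone[OF H(1,4) 3(3)]] .
    then show False
      using 3 H antisym_le by blast
  next
    case 4
    then have "star a \<preceq> star (star a)"
      using le_star_antimono[of "star a" h "star a" k] H hk by simp
    then have "star a = zero"
      using le_star_self_imp_zero H by blast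
    then show False
      using a H by (auto simp: proper_def)
  qed
qed

lemma pi_set_singletons_le_star_imp_nested:
  assumes "a \<in> H" "b \<in> H"
    and h: "h \<in> pi_set H (\<preceq>) star {a}" and k: "k \<in> pi_set H (\<preceq>) star {b}"
    and "h \<preceq> star k"
  shows "nested (\<preceq>) star a b"
proof -
  obtain x y where x: "x \<in> {a, star a}" "x \<preceq> h" and y: "y \<in> {b, star b}" "y \<preceq> k"
    using h k by (auto simp: mem_pi_set)
  have "x \<preceq> star y"
    using le_star_antimono[OF _ _ _ _ x(2) y(2) \<open>h \<preceq> star k\<close>] x(1) y(1) h k assms(1,2) star_mem
    by (auto simp: mem_pi_set)
  then show ?thesis
    using x(1) y(1) \<open>b \<in> H\<close> by (auto simp: nested_def)
qed

lemma pi_set_consistent: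
  assumes "\<forall>a\<in>A. proper H star zero a" "transverse_set (\<preceq>) star A"
    and "h \<in> pi_set H (\<preceq>) star A" "k \<in> pi_set H (\<preceq>) star A"
  shows "\<not> h \<preceq> star k"
proof
  assume hk: "h \<preceq> star k"
  obtain a b where ab: "a \<in> A" "b \<in> A"
    and h: "h \<in> pi_set H (\<preceq>) star {a}" and k: "k \<in> pi_set H (\<preceq>) star {b}"
    using mem_pi_set_singleton[OF assms(3)] mem_pi_set_singleton[OF assms(4)] by blast
  show False
  proof (cases "a = b")
    case True
    then show False
      using pi_set_singleton_consistent h k hk ab assms(1) by blast
  next
    case False
    have "nested (\<preceq>) star a b"
      using pi_set_singletons_le_star_imp_nested h k hk ab assms(1) by (auto simp: proper_def)
    then show False
      using False ab assms(2) by (auto simp: transverse_set_def)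
  qed
qed

lemma mem_pi_set_imp_nested: "h \<in> pi_set H (\<preceq>) star A \<Longrightarrow> \<exists>a\<in>A. nested (\<preceq>) star a h"
  by (auto simp: mem_pi_set nested_def)

lemma nested_imp_mem_pi_set_or_star:
  assumes "a \<in> A" "a \<in> H" "h \<in> H" "nested (\<preceq>) star a h"
  shows "h \<in> pi_set H (\<preceq>) star A \<or> star h \<in> pi_set H (\<preceq>) star A"
proof -
  have "star h \<in> H" "star a \<in> H"
    using assms star_mem by auto
  from \<open>nested (\<preceq>) star a h\<close>
  consider "a \<preceq> h" | "star a \<preceq> h" | "a \<preceq> star h" | "star a \<preceq> star h"
    unfolding nested_def by blast
  then show ?thesis
  proof cases
    case 2
    show ?thesis
    proof (cases "star a = h")
      case True
      then have "star h = a"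
        using assms(2) by auto
      then show ?thesis
        using assms \<open>star h \<in> H\<close> refl_le by (auto simp: mem_pi_set)
    qed (use 2 assms in \<open>auto simp: mem_pi_set\<close>)
  next
    case 4
    show ?thesis
    proof (cases "a = h")
      case True
      then show ?thesis
        using assms refl_le by (auto simp: mem_pi_set)
    next
      case False
      then have "star a \<noteq> star h"
        using assms star_inj by blast
      then show ?thesis
        using 4 assms \<open>star h \<in> H\<close> by (auto simp: mem_pi_set)
    qed
  qed (use assms \<open>star h \<in> H\<close> in \<open>auto simp: mem_pi_set\<close>)
qed

lemma pi_set_complete_if_maximal_transverse:
  assumes A: "maximal_transverse H (\<preceq>) star zero A" "A \<noteq> {}" and h: "h \<in> H"
  shows "h \<in> pi_set H (\<preceq>) star A \<or> star h \<in> pi_set H (\<preceq>) star A"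
proof -
  have A_proper: "\<forall>a\<in>A. proper H star zero a" and A_transverse: "transverse_set (\<preceq>) star A"
    using A(1) by (auto simp: maximal_transverse_def)
  then have A_H: "A \<subseteq> H"
    by (auto simp: proper_def)
  consider "h \<in> {zero, star zero}" | "h \<in> A" | "proper H star zero h" "h \<notin> A"
    using h by (auto simp: proper_def)
  then show ?thesis
  proof cases
    case 1
    obtain a where "a \<in> A"
      using A(2) by blast
    then have "star zero \<in> pi_set H (\<preceq>) star A"
      using A_H le_star_zero zero_mem star_mem by (auto simp: mem_pi_set)
    then show ?thesis
      using 1 zero_mem by auto
  next
    case 2
    then show ?thesis
      using h refl_le by (auto simp: mem_pi_set)
  next
    case 3
    then have "\<not> transverse_set (\<preceq>) star (insert h A)"
      using A(1) A_proper unfolding maximal_transverse_def by blast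
    then obtain a where "a \<in> A" "nested (\<preceq>) star a h"
      using A_transverse A_H h nested_sym
      by (auto simp: transverse_set_eq_pairwise pairwise_insert)
    then show ?thesis
      using nested_imp_mem_pi_set_or_star A_H h by blast
  qed
qed

lemma maximal_transverse_if_pi_set_complete:
  assumes "\<forall>a\<in>A. proper H star zero a" "transverse_set (\<preceq>) star A"
    and complete: "\<And>h. h \<in> H \<Longrightarrow> h \<in> pi_set H (\<preceq>) star A \<or> star h \<in> pi_set H (\<preceq>) star A"
  shows "maximal_transverse H (\<preceq>) star zero A"
  unfolding maximal_transverse_def
proof (intro conjI assms allI impI)
  fix B
  assume B: "(\<forall>b\<in>B. proper H star zero b) \<and> transverse_set (\<preceq>) star B \<and> A \<subseteq> B"
  have "h \<in> A" if "h \<in> B" for h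
  proof -
    have "h \<in> H"
      using B that by (auto simp: proper_def)
    then obtain a where "a \<in> A" "nested (\<preceq>) star a h"
      using complete mem_pi_set_imp_nested nested_star_right by blast
    then show "h \<in> A"
      using B that by (auto simp: transverse_set_def)
  qed
  then show "B = A"
    using B by blast
qed

lemma ultrafilter_pi_set:
  assumes "maximal_transverse H (\<preceq>) star zero A" "A \<noteq> {}"
  shows "ultrafilter H (\<preceq>) star (pi_set H (\<preceq>) star A)"
proof -
  let ?P = "pi_set H (\<preceq>) star A"
  have consistent: "\<not> h \<preceq> star k" if "h \<in> ?P" "k \<in> ?P" for h k
    using pi_set_consistent assms(1) that by (auto simp: maximal_transverse_def)
  have "(h \<in> ?P) \<noteq> (star h \<in> ?P)" if "h \<in> H" for h
    using pi_set_complete_if_maximal_transverse[OF assms that] consistent[of h "star h"]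
      refl_le that by auto
  then show ?thesis
    using consistent by (auto simp: ultrafilter_def mem_pi_set)
qed

subsection \<open>Descending chains\<close>

lemma antitone_chain_le:
  assumes f: "\<And>n. f n \<in> H" "\<And>n. f (Suc n) \<preceq> f n" and "m \<le> n"
  shows "f n \<preceq> f m"
  using \<open>m \<le> n\<close>
proof (induction n rule: dec_induct)
  case base
  show ?case using refl_le f by blast
next
  case (step n)
  then show ?case using trans_le[OF f(1) f(1) f(1) f(2)] by blast
qed

lemma antitone_chain_common_lower_bound:
  assumes f: "\<And>n. f n \<in> H" "\<And>n. f (Suc n) \<preceq> f n"
    and S: "finite S" "S \<subseteq> H" and below: "\<And>n. \<exists>c\<in>S. c \<preceq> f n"
  shows "\<exists>c\<in>S. \<forall>n. c \<preceq> f n"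
proof -
  obtain c where c: "\<And>n. c n \<in> S" "\<And>n. c n \<preceq> f n"
    using choice[of "\<lambda>n c. c \<in> S \<and> c \<preceq> f n"] below by blast
  have "range c \<subseteq> S"
    using c(1) by blast
  then have "finite (range c)"
    using S(1) by (rule finite_subset)
  then obtain n0 where "infinite {n. c n = c n0}"
    using pigeonhole_infinite[of UNIV c] by auto
  have "c n0 \<preceq> f n" for n
  proof -
    obtain m where "n \<le> m" "c m = c n0"
      using \<open>infinite {n. c n = c n0}\<close> unfolding infinite_nat_iff_unbounded_le by blast
    then have "c n0 \<preceq> f m"
      using c(2)[of m] by simp
    moreover have "c n0 \<in> H"
      using c(1) S(2) by blast
    ultimately show ?thesis
      using trans_le[OF _ f(1) f(1) _ antitone_chain_le[of f, OF f \<open>n \<le> m\<close>]] by blast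
  qed
  then show ?thesis
    using c(1) by blast
qed

lemma antitone_chain_stabilizes:
  assumes f: "\<And>n. f n \<in> H" "\<And>n. f (Suc n) \<preceq> f n" and "finite (f ` {m..})"
  shows "\<exists>N. \<forall>n\<ge>N. f n = f N"
proof -
  obtain N where N: "N \<ge> m" "infinite {n \<in> {m..}. f n = f N}"
    using pigeonhole_infinite[of "{m..}" f] assms(3) infinite_Ici by auto
  have "f n = f N" if "n \<ge> N" for n
  proof -
    obtain k where "n \<le> k" "f k = f N"
      using N(2) unfolding infinite_nat_iff_unbounded_le by blast
    then have "f N \<preceq> f n"
      using antitone_chain_le[of f, OF f \<open>n \<le> k\<close>] by simp
    then show ?thesis
      using antisym_le[OF f(1) f(1) antitone_chain_le[of f, OF f that]] by blast
  qed
  then show ?thesis by blast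
qed

lemma pi_set_chain_stabilizes:
  assumes discrete: "discrete_pocset H (\<preceq>) star zero"
    and A: "\<forall>a\<in>A. proper H star zero a" "finite A"
    and f: "\<And>n. f n \<in> pi_set H (\<preceq>) star A" "\<And>n. f (Suc n) \<preceq> f n"
  shows "\<exists>N. \<forall>n\<ge>N. f n = f N"
proof -
  let ?S = "A \<union> star ` A"
  have S_proper: "\<forall>c\<in>?S. proper H star zero c"
    using A(1) proper_star by blast
  then have "?S \<subseteq> H"
    by (auto simp: proper_def)
  have f_H: "f n \<in> H" for n
    using f(1) by (auto simp: mem_pi_set)
  have "\<exists>c\<in>?S. c \<preceq> f n" for n
    using f(1)[of n] by (auto simp: mem_pi_set)
  moreover have "finite ?S"
    using A(2) by simp
  ultimately obtain c where "c \<in> ?S" and c_le: "\<And>n. c \<preceq> f n"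
    using antitone_chain_common_lower_bound[of f, OF f_H f(2) _ \<open>?S \<subseteq> H\<close>] by blast
  then have c: "proper H star zero c" "c \<in> H"
    using S_proper by (auto simp: proper_def)
  show ?thesis
  proof (cases "\<forall>n. f n = star zero")
    case False
    then obtain m where "f m \<noteq> star zero"
      by blast
    moreover have "f m \<noteq> zero"
    proof
      assume "f m = zero"
      then have "c = zero"
        using antisym_le[OF c(2) zero_mem] c_le[of m] zero_le[OF c(2)] by simp
      then show False
        using c(1) by (simp add: proper_def)
    qed
    ultimately have "proper H star zero (f m)"
      using f_H by (simp add: proper_def)
    then have "finite {h \<in> H. c \<preceq> h \<and> h \<preceq> f m}"
      using discrete c(1) unfolding discrete_pocset_def by blast
    moreover have "f ` {m..} \<subseteq> {h \<in> H. c \<preceq> h \<and> h \<preceq> f m}"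
      using f_H c_le antitone_chain_le[of f, OF f_H f(2)] by auto
    ultimately show ?thesis
      using antitone_chain_stabilizes[of f, OF f_H f(2) finite_subset] by blast
  qed auto
qed

lemma principal_ultrafilter_pi_set:
  assumes "discrete_pocset H (\<preceq>) star zero" "omega_dimensional H (\<preceq>) star"
    and "\<exists>h. proper H star zero h" and A: "maximal_transverse H (\<preceq>) star zero A"
  shows "principal_ultrafilter H (\<preceq>) star (pi_set H (\<preceq>) star A)"
proof -
  have A_proper: "\<forall>a\<in>A. proper H star zero a" and "transverse_set (\<preceq>) star A"
    using A by (auto simp: maximal_transverse_def)
  moreover have "A \<subseteq> H"
    using A_proper by (auto simp: proper_def)
  ultimately have "finite A"
    using assms(2) unfolding omega_dimensional_def by blast
  have "A \<noteq> {}"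
  proof
    assume "A = {}"
    obtain h where "proper H star zero h"
      using assms(3) by blast
    then have "(\<forall>b\<in>{h}. proper H star zero b) \<and> transverse_set (\<preceq>) star {h} \<and> A \<subseteq> {h}"
      using \<open>A = {}\<close> by (simp add: transverse_set_def)
    then have "{h} = A"
      using A unfolding maximal_transverse_def by blast
    then show False
      using \<open>A = {}\<close> by blast
  qed
  have "\<exists>N. \<forall>n\<ge>N. f n = f N"
    if "\<forall>n. f n \<in> pi_set H (\<preceq>) star A" "\<forall>n. f (Suc n) \<preceq> f n" for f
    using pi_set_chain_stabilizes[OF assms(1) A_proper \<open>finite A\<close>, of f] that by blast
  then show ?thesis
    using ultrafilter_pi_set[OF A \<open>A \<noteq> {}\<close>] unfolding principal_ultrafilter_def by blast
qed

subsection \<open>Principal ultrafilters\<close>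

lemma ultrafilter_up_closed:
  assumes "ultrafilter H (\<preceq>) star \<alpha>" "h \<in> \<alpha>" "k \<in> H" "h \<preceq> k"
  shows "k \<in> \<alpha>"
  using assms unfolding ultrafilter_def by (metis star_star)

lemma ultrafilter_star_notin: "ultrafilter H (\<preceq>) star \<alpha> \<Longrightarrow> h \<in> \<alpha> \<Longrightarrow> star h \<notin> \<alpha>"
  unfolding ultrafilter_def by blast

lemma ultrafilter_zero_notin: "ultrafilter H (\<preceq>) star \<alpha> \<Longrightarrow> zero \<notin> \<alpha>"
  unfolding ultrafilter_def using zero_le star_mem zero_mem by blast

lemma principal_ultrafilter_minimal_below:
  assumes \<alpha>: "principal_ultrafilter H (\<preceq>) star \<alpha>" and x: "x \<in> \<alpha>"
  shows "\<exists>m\<in>minimal_elements (\<preceq>) \<alpha>. m \<preceq> x"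
proof -
  have \<alpha>_H: "\<alpha> \<subseteq> H"
    using \<alpha> by (simp add: principal_ultrafilter_def ultrafilter_def)
  let ?R = "{(y, z). y \<in> \<alpha> \<and> z \<in> \<alpha> \<and> y \<preceq> z \<and> y \<noteq> z}"
  have "wf ?R"
    unfolding wf_iff_no_infinite_down_chain
  proof
    assume "\<exists>f. \<forall>i. (f (Suc i), f i) \<in> ?R"
    then obtain f where f: "\<forall>i. f i \<in> \<alpha>" "\<forall>i. f (Suc i) \<preceq> f i" "\<And>i. f (Suc i) \<noteq> f i"
      by auto
    obtain N where "\<forall>n\<ge>N. f n = f N"
      using \<alpha> f(1,2) unfolding principal_ultrafilter_def by blast
    then show False
      using f(3)[of N] le_SucI by blast
  qed
  moreover have "x \<in> {y \<in> \<alpha>. y \<preceq> x}"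
    using x \<alpha>_H refl_le by blast
  ultimately obtain m where m: "m \<in> \<alpha>" "m \<preceq> x"
    and no_smaller: "\<And>y. (y, m) \<in> ?R \<Longrightarrow> y \<notin> {y \<in> \<alpha>. y \<preceq> x}"
    by (rule wfE_min) blast
  have "h = m" if h: "h \<in> \<alpha>" "h \<preceq> m" for h
  proof -
    have "h \<preceq> x"
      using trans_le[OF _ _ _ h(2) m(2)] h(1) m(1) x \<alpha>_H by blast
    then show ?thesis
      using no_smaller[of h] h m(1) by blast
  qed
  then have "m \<in> minimal_elements (\<preceq>) \<alpha>"
    using m(1) by (auto simp: minimal_elements_def)
  then show ?thesis
    using m by blast
qed

lemma minimal_element_proper:
  assumes \<alpha>: "ultrafilter H (\<preceq>) star \<alpha>" and "\<exists>h. proper H star zero h"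
    and m: "m \<in> minimal_elements (\<preceq>) \<alpha>"
  shows "proper H star zero m"
proof -
  obtain h where h: "proper H star zero h"
    using assms(2) by blast
  obtain p where p: "proper H star zero p" "p \<in> \<alpha>"
    using \<alpha> h proper_star unfolding ultrafilter_def proper_def by metis
  have "m \<in> \<alpha>" "m \<in> H"
    using m \<alpha> by (auto simp: minimal_elements_def ultrafilter_def)
  moreover have "m \<noteq> star zero"
    using m p le_star_zero by (auto simp: minimal_elements_def proper_def)
  ultimately show ?thesis
    using ultrafilter_zero_notin[OF \<alpha>] by (auto simp: proper_def)
qed

lemma star_le_if_nested_minimal_elements:
  assumes \<alpha>: "ultrafilter H (\<preceq>) star \<alpha>"
    and a: "a \<in> minimal_elements (\<preceq>) \<alpha>" and m: "m \<in> minimal_elements (\<preceq>) \<alpha>"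
    and "a \<noteq> m" "nested (\<preceq>) star a m"
  shows "star a \<preceq> m"
proof -
  have "a \<in> \<alpha>" "m \<in> \<alpha>" "a \<in> H" "m \<in> H"
    using a m \<alpha> by (auto simp: minimal_elements_def ultrafilter_def)
  have "\<not> a \<preceq> m"
    using m \<open>a \<in> \<alpha>\<close> \<open>a \<noteq> m\<close> by (auto simp: minimal_elements_def)
  moreover have "\<not> star a \<preceq> star m"
    using a \<open>m \<in> \<alpha>\<close> \<open>a \<noteq> m\<close> star_antitone[of "star a" "star m"] star_mem \<open>a \<in> H\<close> \<open>m \<in> H\<close>
    by (auto simp: minimal_elements_def)
  moreover have "\<not> a \<preceq> star m"
    using \<alpha> \<open>a \<in> \<alpha>\<close> \<open>m \<in> \<alpha>\<close> by (auto simp: ultrafilter_def)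
  ultimately show ?thesis
    using assms(5) by (auto simp: nested_def)
qed

lemma principal_ultrafilter_eq_pi_set:
  assumes \<alpha>: "principal_ultrafilter H (\<preceq>) star \<alpha>" and "\<exists>h. proper H star zero h"
  shows "\<exists>A. maximal_transverse H (\<preceq>) star zero A \<and> \<alpha> = pi_set H (\<preceq>) star A"
proof -
  let ?M = "minimal_elements (\<preceq>) \<alpha>"
  have uf: "ultrafilter H (\<preceq>) star \<alpha>"
    using \<alpha> by (auto simp: principal_ultrafilter_def)
  then have \<alpha>_H: "\<alpha> \<subseteq> H"
    by (auto simp: ultrafilter_def)
  have M_\<alpha>: "?M \<subseteq> \<alpha>"
    by (auto simp: minimal_elements_def)
  obtain A where A: "A \<subseteq> ?M" "transverse_set (\<preceq>) star A"
    and A_max: "\<And>C. A \<subseteq> C \<Longrightarrow> C \<subseteq> ?M \<Longrightarrow> transverse_set (\<preceq>) star C \<Longrightarrow> C = A"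
    using exists_maximal_pairwise_subset[of ?M "\<lambda>h k. \<not> nested (\<preceq>) star h k"]
    unfolding transverse_set_eq_pairwise by blast
  have A_H: "A \<subseteq> H"
    using A(1) M_\<alpha> \<alpha>_H by blast
  have "x \<in> pi_set H (\<preceq>) star A" if x: "x \<in> \<alpha>" for x
  proof -
    obtain m where m: "m \<in> ?M" "m \<preceq> x"
      using principal_ultrafilter_minimal_below[OF \<alpha> x] by blast
    have "x \<in> H" "m \<in> H"
      using x m M_\<alpha> \<alpha>_H by auto
    show ?thesis
    proof (cases "m \<in> A")
      case True
      then show ?thesis
        using m \<open>x \<in> H\<close> by (auto simp: mem_pi_set)
    next
      case False
      then have "\<not> transverse_set (\<preceq>) star (insert m A)"
        using A_max[of "insert m A"] A m by blast
      then obtain a where a: "a \<in> A" "a \<noteq> m" "nested (\<preceq>) star a m"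
        using A(2) A_H \<open>m \<in> H\<close> nested_sym
        by (auto simp: transverse_set_eq_pairwise pairwise_insert)
      then have "star a \<preceq> m"
        using star_le_if_nested_minimal_elements[OF uf] A(1) m(1) by blast
      then have "star a \<preceq> x"
        using trans_le[OF _ \<open>m \<in> H\<close> \<open>x \<in> H\<close> _ m(2)] star_mem a(1) A_H by blast
      moreover have "star a \<noteq> x"
        using ultrafilter_star_notin[OF uf] a A(1) M_\<alpha> x by blast
      ultimately show ?thesis
        using a \<open>x \<in> H\<close> by (auto simp: mem_pi_set)
    qed
  qed
  moreover have "h \<in> \<alpha>" if h: "h \<in> pi_set H (\<preceq>) star A" for h
  proof -
    obtain a where a: "a \<in> A" "a \<preceq> h \<or> star a \<preceq> h \<and> star a \<noteq> h" and "h \<in> H"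
      using h unfolding mem_pi_set by blast
    have "a \<in> \<alpha>" "a \<in> H"
      using a A(1) M_\<alpha> A_H by auto
    show "h \<in> \<alpha>"
    proof (rule ccontr)
      assume "h \<notin> \<alpha>"
      then have "star h \<in> \<alpha>"
        using uf \<open>h \<in> H\<close> unfolding ultrafilter_def by blast
      have "\<not> a \<preceq> h"
        using ultrafilter_up_closed[OF uf \<open>a \<in> \<alpha>\<close> \<open>h \<in> H\<close>] \<open>h \<notin> \<alpha>\<close> by blast
      then have "star h \<preceq> a" "star a \<noteq> h"
        using a(2) star_le_swap[OF \<open>a \<in> H\<close> \<open>h \<in> H\<close>] by auto
      then have "star h = a"
        using \<open>star h \<in> \<alpha>\<close> a(1) A(1) by (auto simp: minimal_elements_def)
      then show False
        using \<open>star a \<noteq> h\<close> \<open>h \<in> H\<close> by auto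
    qed
  qed
  ultimately have "\<alpha> = pi_set H (\<preceq>) star A"
    by blast
  moreover have "maximal_transverse H (\<preceq>) star zero A"
  proof (rule maximal_transverse_if_pi_set_complete)
    show "\<forall>a\<in>A. proper H star zero a"
      using minimal_element_proper[OF uf assms(2)] A(1) by blast
    show "h \<in> pi_set H (\<preceq>) star A \<or> star h \<in> pi_set H (\<preceq>) star A" if "h \<in> H" for h
      using uf that \<open>\<alpha> = pi_set H (\<preceq>) star A\<close> by (auto simp: ultrafilter_def)
  qed (rule A(2))
  ultimately show ?thesis
    by blast
qed

end

theorem mainTheorem15:
  assumes "pocset H le star zero"
    and "discrete_pocset H le star zero"
    and "omega_dimensional H le star"
    and "\<exists>h. proper H star zero h"
  shows "(\<forall>A. maximal_transverse H le star zero A \<longrightarrow>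
            principal_ultrafilter H le star (pi_set H le star A)) \<and>
         (\<forall>\<alpha>. principal_ultrafilter H le star \<alpha> \<longrightarrow>
            (\<exists>A. maximal_transverse H le star zero A \<and> \<alpha> = pi_set H le star A))"
proof -
  interpret poc_set H le star zero
    using assms(1) by unfold_locales
  show ?thesis
    using principal_ultrafilter_pi_set[OF assms(2-4)] principal_ultrafilter_eq_pi_set[OF _ assms(4)]
    by blast
qed

end
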